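(* Let $A_1,\dots,A_d\in\mathbb{R}^{d\times d}$ be symmetric and define $H^m:\mathbb{R}^d\to\mathbb{R}^d$ and $H^v:\mathbb{R}^d\to\mathbb{R}^{d^2}$ by $$H^m_k(z)=z^{\intercal}A_kz,\qquad H^v_{kl}(z)=(z^{\intercal}A_kz)z_l+z_k(z^{\intercal}A_lz),\quad 1\le k,l\le d.$$ Let $\tilde\rho$ be a probability density on $\mathbb{R}^d$ with all moments finite, $\tilde{\mathbb{E}}$ the expectation with respect to $\tilde\rho$, $\bar H^m=\tilde{\mathbb{E}}[H^m(\tilde Z)]$, $\bar H^v=\tilde{\mathbb{E}}[H^v(\tilde Z)]$, and let $\Gamma_m,\Gamma_v$ be symmetric positive definite matrices of sizes $d\times d$ and $d^2\times d^2$. Define $K^m=\tilde K^m\Gamma_m^{-2}$ and $K^v=\tilde K^v\Gamma_v^{-2}$ with $\tilde K^m(z)\in\mathbb{R}^{d\times d}$, $\tilde K^v(z)\in\mathbb{R}^{d\times d^2}$ given by $$\tilde K^m_{j,k}(z)=\tfrac12 z_j\big[(z^{\intercal}A_kz)-\bar H^m_k\big],\qquad \tilde K^v_{j,kl}(z)=\tfrac13z_j(z^{\intercal}A_kz)z_l+\tfrac13z_j(z^{\intercal}A_lz)z_k-\tfrac13z_j\bar H^v_{kl}.$$ Then for $(K,H,\Gamma)=(K^m,H^m,\Gamma_m)$ and $(K,H,\Gamma)=(K^v,H^v,\Gamma_v)$, $$\tilde{\mathbb{E}}\big[K(\tilde Z)^{\intercal}\nabla H(\tilde Z)\big]=\Gamma^{-2}C^H,\qquad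 C^H=\tilde{\mathbb{E}}\big[(H(\tilde Z)-\bar H)(H(\tilde Z)-\bar H)^{\intercal}\big].$$
   Context: $\tilde Z$ is a random vector with density $\tilde\rho$. For a vector-valued $H$, $\nabla H$ is the matrix $(\nabla H)_{jl}=\partial_{z_j}H_l$, so $(K^{\intercal}\nabla H)_{kl}=\sum_jK_{jk}\partial_{z_j}H_l$. Indices of $H^v$ and of the columns of $\tilde K^v$ run over pairs $(k,l)$, $1\le k,l\le d$. *)

theory Defs
  imports "HOL-Analysis.Analysis"
begin

definition qf :: "('n::finite \<Rightarrow> real^'n^'n) \<Rightarrow> 'n \<Rightarrow> real^'n \<Rightarrow> real" where
  "qf A k z = z \<bullet> (A k *v z)"

definition Hm :: "('n::finite \<Rightarrow> real^'n^'n) \<Rightarrow> real^'n \<Rightarrow> real^'n" where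
  "Hm A z = (\<chi> k. qf A k z)"

definition Hv :: "('n::finite \<Rightarrow> real^'n^'n) \<Rightarrow> real^'n \<Rightarrow> real^('n \<times> 'n)" where
  "Hv A z = (\<chi> p. case p of (k, l) \<Rightarrow> qf A k z * z $ l + z $ k * qf A l z)"

text \<open>Gradient: (grad H z) \$ j \$ l = partial derivative of H_l w.r.t. z_j at z.\<close>
definition grad :: "(real^'n::finite \<Rightarrow> real^'m::finite) \<Rightarrow> real^'n \<Rightarrow> real^'m^'n" where
  "grad H z = (\<chi> j l. deriv (\<lambda>t. H (z + t *\<^sub>R axis j 1) $ l) 0)"

definition Ktm :: "('n::finite \<Rightarrow> real^'n^'n) \<Rightarrow> real^'n \<Rightarrow> real^'n \<Rightarrow> real^'n^'n" where
  "Ktm A Hbar z = (\<chi> j k. (1/2) * z $ j * (qf A k z - Hbar $ k))"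

definition Ktv :: "('n::finite \<Rightarrow> real^'n^'n) \<Rightarrow> real^('n\<times>'n) \<Rightarrow> real^'n \<Rightarrow> real^('n\<times>'n)^'n" where
  "Ktv A Hbar z = (\<chi> j p. case p of (k, l) \<Rightarrow>
      (1/3) * z $ j * qf A k z * z $ l + (1/3) * z $ j * qf A l z * z $ k
      - (1/3) * z $ j * Hbar $ (k, l))"

definition outer :: "real^'m::finite \<Rightarrow> real^'m^'m" where
  "outer v = (\<chi> i j. v $ i * v $ j)"

definition covmat :: "(real^'n::finite) measure \<Rightarrow> (real^'n \<Rightarrow> real^'m::finite) \<Rightarrow> real^'m^'m" where
  "covmat M H = (\<integral>z. outer (H z - (\<integral>w. H w \<partial>M)) \<partial>M)"

definition sym_pos_def_mat :: "real^'m::finite^'m \<Rightarrow> bool" where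
  "sym_pos_def_mat G \<longleftrightarrow> transpose G = G \<and> (\<forall>x. x \<noteq> 0 \<longrightarrow> x \<bullet> (G *v x) > 0)"

end

theory Submission
  imports Defs "HOL-Probability.Probability_Measure"
begin

text \<open>\<open>Hm A\<close> and \<open>Hv A\<close> are homogeneous of degree 2 and 3, and the prefactors 1/2 and 1/3
  of \<open>Ktm\<close> and \<open>Ktv\<close> are the reciprocal degrees.  Euler's identity \<open>\<Sum>\<^sub>j z\<^sub>j \<partial>\<^sub>j H\<^sub>l = d H\<^sub>l\<close>
  therefore turns \<open>K\<^sup>T \<nabla>H\<close> into the matrix with entries \<open>(H\<^sub>k - Hbar\<^sub>k) H\<^sub>l\<close>, up to the factor
  \<open>\<Gamma>\<^sup>-\<^sup>2\<close>, which is symmetric and passes through the transpose.  Its expectation is the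
  covariance because \<open>H - Hbar\<close> has mean zero.  Integrability comes from the moment assumption,
  since a continuous homogeneous function of degree \<open>d\<close> is bounded by \<open>C |z|\<^sup>d\<close>.\<close>

lemma matrix_inv_inverse:
  fixes A :: "'a::semiring_1^'n^'m"
  assumes "invertible A"
  shows "A ** matrix_inv A = mat 1" and "matrix_inv A ** A = mat 1"
  using someI_ex[OF assms[unfolded invertible_def]] unfolding matrix_inv_def by auto

lemma transpose_matrix_inv_symmetric:
  fixes G :: "'a::field^'n^'n"
  assumes "transpose G = G" and "invertible G"
  shows "transpose (matrix_inv G) = matrix_inv G"
proof -
  have "transpose (matrix_inv G) ** G = mat 1"
    using arg_cong[OF matrix_inv_inverse(1)[OF assms(2)], of transpose]
    by (simp add: matrix_transpose_mul assms(1))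
  then have "transpose (matrix_inv G) = transpose (matrix_inv G) ** (G ** matrix_inv G)"
    by (simp add: matrix_inv_inverse[OF assms(2)])
  also have "\<dots> = matrix_inv G"
    by (simp add: matrix_mul_assoc \<open>transpose (matrix_inv G) ** G = mat 1\<close>)
  finally show ?thesis .
qed

lemma sym_pos_def_mat_invertible:
  assumes "sym_pos_def_mat G"
  shows "invertible G"
proof -
  have "\<forall>x. G *v x = 0 \<longrightarrow> x = 0"
    using assms unfolding sym_pos_def_mat_def by (metis inner_zero_right less_irrefl)
  then show ?thesis
    using matrix_left_invertible_ker invertible_left_inverse by blast
qed

lemma bounded_linear_matrix_mult_left: "bounded_linear ((**) (G::real^'m::finite^'k::finite))"
  unfolding linear_conv_bounded_linear[symmetric]
  by (rule linearI) (simp_all add: vec_eq_iff matrix_matrix_mult_def distrib_left sum.distrib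
      sum_distrib_left mult.left_commute)

lemma bounded_linear_axis: "bounded_linear (axis i :: 'b::euclidean_space \<Rightarrow> 'b^'m::finite)"
  unfolding linear_conv_bounded_linear[symmetric]
  by (rule linearI) (simp_all add: vec_eq_iff axis_def)

lemma integrable_vec_iff:
  fixes f :: "'a \<Rightarrow> 'b::euclidean_space^'m::finite"
  shows "integrable M f \<longleftrightarrow> (\<forall>i. integrable M (\<lambda>x. f x $ i))"
proof
  assume "\<forall>i. integrable M (\<lambda>x. f x $ i)"
  then have "integrable M (\<lambda>x. \<Sum>i\<in>UNIV. axis i (f x $ i))"
    by (intro Bochner_Integration.integrable_sum integrable_bounded_linear[OF bounded_linear_axis])
      auto
  moreover have "(\<Sum>i\<in>UNIV. axis i (v $ i)) = v" for v :: "'b^'m"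
    by (simp add: vec_eq_iff axis_def if_distrib cong: if_cong)
  ultimately show "integrable M f"
    by simp
qed (auto intro: integrable_bounded_linear[OF bounded_linear_vec_nth])

lemma integral_vec_nth:
  fixes f :: "'a \<Rightarrow> 'b::euclidean_space^'m::finite"
  assumes "integrable M f"
  shows "integral\<^sup>L M f $ i = (\<integral>x. f x $ i \<partial>M)"
  using integral_bounded_linear[OF bounded_linear_vec_nth assms] by simp

lemma integral_mat_nth:
  fixes f :: "'a \<Rightarrow> 'b::euclidean_space^'m::finite^'k::finite"
  assumes "integrable M f"
  shows "integral\<^sup>L M f $ i $ j = (\<integral>x. f x $ i $ j \<partial>M)"
  using assms by (simp add: integral_vec_nth integrable_vec_iff)

lemma integrable_homogeneous:
  fixes f :: "'a::euclidean_space \<Rightarrow> real"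
  assumes sets: "sets M = sets borel"
    and cont: "continuous_on UNIV f"
    and hom: "\<And>c z. c \<ge> 0 \<Longrightarrow> f (c *\<^sub>R z) = c ^ d * f z"
    and moment: "integrable M (\<lambda>z. norm z ^ d)"
  shows "integrable M f"
proof -
  have "bounded (f ` sphere 0 1)"
    by (intro compact_imp_bounded compact_continuous_image continuous_on_subset[OF cont]) auto
  then obtain C where C: "\<And>u. norm u = 1 \<Longrightarrow> \<bar>f u\<bar> \<le> C"
    unfolding bounded_iff by fastforce
  obtain u :: 'a where u: "norm u = 1"
    using vector_choose_size zero_le_one by blast
  have bound: "\<bar>f z\<bar> \<le> C * norm z ^ d" for z
  proof (cases "z = 0")
    case True
    have "\<bar>f z\<bar> = 0 ^ d * \<bar>f u\<bar>"
      using hom[of 0 u] True by (simp add: abs_mult)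
    also have "\<dots> \<le> 0 ^ d * C"
      using C[OF u] by (simp add: mult_left_mono)
    finally show ?thesis
      using True by (simp add: mult.commute)
  next
    case False
    have "f z = norm z ^ d * f (z /\<^sub>R norm z)"
      using hom[of "norm z" "z /\<^sub>R norm z"] False by simp
    then show ?thesis
      using C[of "z /\<^sub>R norm z"] False by (simp add: abs_mult mult.commute mult_left_mono)
  qed
  have "f \<in> borel_measurable M"
    using borel_measurable_continuous_onI[OF cont] measurable_cong_sets[OF sets refl] by blast
  then show ?thesis
    using bound
    by (intro Bochner_Integration.integrable_bound[OF integrable_mult_right[OF moment, of C]])
      (auto intro: order_trans[OF _ abs_ge_self])
qed

lemma has_real_derivative_along_line:
  assumes "(f has_derivative f') (at z)"
  shows "((\<lambda>t. f (z + t *\<^sub>R e)) has_real_derivative f' e) (at 0)"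
proof -
  have "((\<lambda>t. z + t *\<^sub>R e) has_derivative (\<lambda>t. t *\<^sub>R e)) (at 0)"
    by (auto intro!: derivative_eq_intros)
  then have "((f \<circ> (\<lambda>t. z + t *\<^sub>R e)) has_derivative (f' \<circ> (\<lambda>t. t *\<^sub>R e))) (at 0)"
    by (rule diff_chain_at) (simp add: assms)
  moreover have "f' (t *\<^sub>R e) = f' e * t" for t
    using linear_scale[OF has_derivative_linear[OF assms]] by simp
  ultimately show ?thesis
    by (simp add: has_field_derivative_def o_def)
qed

lemma euler_homogeneous:
  fixes f :: "real^'n::finite \<Rightarrow> real"
  assumes "f differentiable (at z)" and hom: "\<And>c. f (c *\<^sub>R z) = c ^ d * f z"
  shows "(\<Sum>j\<in>UNIV. z $ j * deriv (\<lambda>t. f (z + t *\<^sub>R axis j 1)) 0) = real d * f z"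
proof -
  obtain f' where f': "(f has_derivative f') (at z)"
    using assms(1) unfolding differentiable_def by blast
  have "(\<Sum>j\<in>UNIV. z $ j * deriv (\<lambda>t. f (z + t *\<^sub>R axis j 1)) 0)
      = (\<Sum>j\<in>UNIV. z $ j * f' (axis j 1))"
    by (simp add: DERIV_imp_deriv[OF has_real_derivative_along_line[OF f']])
  also have "\<dots> = f' (\<Sum>j\<in>UNIV. z $ j *\<^sub>R axis j 1)"
    using has_derivative_linear[OF f'] by (simp add: linear_sum linear_scale)
  also have "\<dots> = f' z"
    using basis_expansion[of z] by (simp add: scalar_mult_eq_scaleR)
  also have "\<dots> = real d * f z"
  proof (rule DERIV_unique[OF has_real_derivative_along_line[OF f']])
    have "((\<lambda>t. (1 + t) ^ d * f z) has_real_derivative real d * f z) (at 0)"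
      by (auto intro!: derivative_eq_intros)
    moreover have "f (z + t *\<^sub>R z) = (1 + t) ^ d * f z" for t
      using hom[of "1 + t"] by (simp add: algebra_simps)
    ultimately show "((\<lambda>t. f (z + t *\<^sub>R z)) has_real_derivative real d * f z) (at 0)"
      by simp
  qed
  finally show ?thesis .
qed

lemma vector_matrix_mult_grad_homogeneous:
  fixes H :: "real^'n::finite \<Rightarrow> real^'m::finite"
  assumes "\<And>l. (\<lambda>w. H w $ l) differentiable (at z)" and "\<And>c. H (c *\<^sub>R z) = c ^ d *\<^sub>R H z"
  shows "z v* grad H z = real d *\<^sub>R H z"
  using euler_homogeneous[of "\<lambda>w. H w $ l" for l] assms
  by (simp add: vec_eq_iff vector_matrix_mult_def grad_def mult.commute)

lemma transpose_mult_grad_homogeneous: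
  fixes H :: "real^'n::finite \<Rightarrow> real^'m::finite"
  assumes "\<And>l. (\<lambda>w. H w $ l) differentiable (at z)" and "\<And>c. H (c *\<^sub>R z) = c ^ d *\<^sub>R H z"
    and "d > 0"
    and K: "\<And>j k. K $ j $ k = z $ j * (H z $ k - a $ k) / real d"
  shows "transpose K ** grad H z = (\<chi> k l. (H z $ k - a $ k) * H z $ l)"
proof -
  have "(transpose K ** grad H z) $ k $ l = (H z $ k - a $ k) / real d * (z v* grad H z) $ l" for k l
    by (simp add: matrix_matrix_mult_def vector_matrix_mult_def transpose_def K sum_distrib_left
        algebra_simps)
  then show ?thesis
    using vector_matrix_mult_grad_homogeneous[OF assms(1,2)] \<open>d > 0\<close> by (simp add: vec_eq_iff)
qed

lemma integral_centered_product_eq_covmat: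
  fixes H :: "real^'n::finite \<Rightarrow> real^'m::finite"
  assumes "prob_space M"
    and int: "\<And>k. integrable M (\<lambda>z. H z $ k)"
    and int2: "\<And>k l. integrable M (\<lambda>z. H z $ k * H z $ l)"
  shows "(\<integral>z. (\<chi> k l. (H z $ k - integral\<^sup>L M H $ k) * H z $ l) \<partial>M) = covmat M H"
proof -
  interpret prob_space M by fact
  define m where "m = expectation H"
  have mean: "m $ k = expectation (\<lambda>z. H z $ k)" for k
    using int unfolding m_def by (simp add: integral_vec_nth integrable_vec_iff)
  have "integrable M (\<lambda>z. (\<chi> k l. (H z $ k - m $ k) * H z $ l))"
    and "integrable M (\<lambda>z. outer (H z - m))"
    using int int2 by (simp_all add: integrable_vec_iff outer_def algebra_simps)
  moreover have "(\<integral>z. (H z $ k - m $ k) * H z $ l \<partial>M)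
      = (\<integral>z. (H z $ k - m $ k) * (H z $ l - m $ l) \<partial>M)" for k l
  proof -
    have "(\<integral>z. (H z $ k - m $ k) * (H z $ l - m $ l) \<partial>M)
        = (\<integral>z. (H z $ k - m $ k) * H z $ l \<partial>M) - m $ l * (\<integral>z. H z $ k - m $ k \<partial>M)"
      using int int2 by (simp add: right_diff_distrib algebra_simps)
    moreover have "(\<integral>z. H z $ k - m $ k \<partial>M) = 0"
      using int by (simp add: mean prob_space)
    ultimately show ?thesis
      by simp
  qed
  ultimately show ?thesis
    unfolding covmat_def m_def[symmetric] by (simp add: vec_eq_iff integral_mat_nth outer_def)
qed

lemma integral_transpose_mult_grad_eq_covmat:
  fixes H :: "real^'n::finite \<Rightarrow> real^'m::finite"
    and K :: "real^'n \<Rightarrow> real^'m^'n"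
    and G :: "real^'m^'m"
  assumes "prob_space M" and sets: "sets M = sets borel"
    and moments: "\<And>k. integrable M (\<lambda>z. norm z ^ k)"
    and diff: "\<And>z l. (\<lambda>w. H w $ l) differentiable (at z)"
    and hom: "\<And>c z. H (c *\<^sub>R z) = c ^ d *\<^sub>R H z" and "d > 0"
    and K: "\<And>z j k. K z $ j $ k = z $ j * (H z $ k - integral\<^sup>L M H $ k) / real d"
    and G: "transpose G = G"
  shows "(\<integral>z. transpose (K z ** G) ** grad H z \<partial>M) = G ** covmat M H"
proof -
  have cont: "continuous_on UNIV (\<lambda>z. H z $ l)" for l
    using diff by (simp add: differentiable_imp_continuous_within continuous_at_imp_continuous_on)
  have int: "integrable M (\<lambda>z. H z $ k)" for k
    using hom by (intro integrable_homogeneous[OF sets cont _ moments, of _ d]) simp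
  have int2: "integrable M (\<lambda>z. H z $ k * H z $ l)" for k l
    using hom by (intro integrable_homogeneous[OF sets _ _ moments, of _ "2 * d"])
      (auto intro: continuous_on_mult cont simp: power_add mult_2)
  let ?P = "\<lambda>z. \<chi> k l. (H z $ k - integral\<^sup>L M H $ k) * H z $ l"
  have "transpose (K z ** G) ** grad H z = G ** ?P z" for z
    using transpose_mult_grad_homogeneous[OF diff hom \<open>d > 0\<close> K]
    by (simp add: matrix_transpose_mul G matrix_mul_assoc[symmetric])
  then have "(\<integral>z. transpose (K z ** G) ** grad H z \<partial>M) = G ** (\<integral>z. ?P z \<partial>M)"
    using int int2
    by (simp add: integral_bounded_linear[OF bounded_linear_matrix_mult_left] integrable_vec_iff
        algebra_simps)
  then show ?thesis
    using integral_centered_product_eq_covmat[OF \<open>prob_space M\<close> int int2] by simp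
qed

lemma qf_scaleR: "qf A k (c *\<^sub>R z) = c ^ 2 * qf A k z"
  by (simp add: qf_def matrix_vector_mult_scaleR power2_eq_square)

lemma qf_differentiable: "qf A k differentiable (at z)"
  unfolding qf_def
  by (rule differentiableI, rule bounded_bilinear.FDERIV[OF bounded_bilinear_inner
        has_derivative_ident bounded_linear.has_derivative[OF matrix_vector_mul_bounded_linear
        has_derivative_ident]])

lemma Hm_scaleR: "Hm A (c *\<^sub>R z) = c ^ 2 *\<^sub>R Hm A z"
  by (simp add: Hm_def vec_eq_iff qf_scaleR)

lemma Hm_differentiable: "(\<lambda>w. Hm A w $ k) differentiable (at z)"
  by (simp add: Hm_def qf_differentiable)

lemma Hv_scaleR: "Hv A (c *\<^sub>R z) = c ^ 3 *\<^sub>R Hv A z"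
  by (simp add: Hv_def vec_eq_iff qf_scaleR split: prod.splits)
    (simp add: power_numeral_reduce algebra_simps)

lemma Hv_differentiable: "(\<lambda>w. Hv A w $ p) differentiable (at z)"
  by (cases p) (simp add: Hv_def, intro derivative_intros qf_differentiable
      bounded_linear_imp_differentiable[OF bounded_linear_vec_nth])

lemma Ktm_eq: "Ktm A a z $ j $ k = z $ j * (Hm A z $ k - a $ k) / real 2"
  by (simp add: Ktm_def Hm_def)

lemma Ktv_eq: "Ktv A a z $ j $ p = z $ j * (Hv A z $ p - a $ p) / real 3"
  by (cases p) (simp add: Ktv_def Hv_def algebra_simps)

lemma sym_pos_def_mat_transpose_matrix_inv:
  assumes "sym_pos_def_mat G"
  shows "transpose (matrix_inv G) = matrix_inv G"
  using assms transpose_matrix_inv_symmetric sym_pos_def_mat_invertible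
  unfolding sym_pos_def_mat_def by blast

theorem proposition5p1:
  fixes A :: "'n::finite \<Rightarrow> real^'n^'n"
    and \<rho> :: "real^'n \<Rightarrow> real"
    and \<Gamma>m :: "real^'n^'n"
    and \<Gamma>v :: "real^('n\<times>'n)^('n\<times>'n)"
  assumes symA: "\<And>k. transpose (A k) = A k"
    and rho_meas: "\<rho> \<in> borel_measurable lborel"
    and rho_nonneg: "\<And>z. \<rho> z \<ge> 0"
    and rho_prob: "(\<integral>\<^sup>+ z. ennreal (\<rho> z) \<partial>lborel) = 1"
    and moments: "\<And>k::nat. integrable (density lborel (\<lambda>z. ennreal (\<rho> z))) (\<lambda>z. norm z ^ k)"
    and Gm: "sym_pos_def_mat \<Gamma>m"
    and Gv: "sym_pos_def_mat \<Gamma>v"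
  shows
   "(let M = density lborel (\<lambda>z. ennreal (\<rho> z));
         Hbm = (\<integral>z. Hm A z \<partial>M);
         Km = (\<lambda>z. Ktm A Hbm z ** (matrix_inv \<Gamma>m ** matrix_inv \<Gamma>m))
     in (\<integral>z. transpose (Km z) ** grad (Hm A) z \<partial>M)
          = (matrix_inv \<Gamma>m ** matrix_inv \<Gamma>m) ** covmat M (Hm A))
    \<and> (let M = density lborel (\<lambda>z. ennreal (\<rho> z));
         Hbv = (\<integral>z. Hv A z \<partial>M);
         Kv = (\<lambda>z. Ktv A Hbv z ** (matrix_inv \<Gamma>v ** matrix_inv \<Gamma>v))
     in (\<integral>z. transpose (Kv z) ** grad (Hv A) z \<partial>M)
          = (matrix_inv \<Gamma>v ** matrix_inv \<Gamma>v) ** covmat M (Hv A))"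
proof -
  define M where "M = density lborel (\<lambda>z. ennreal (\<rho> z))"
  have "emeasure M (space M) = 1"
    using rho_meas rho_prob unfolding M_def by (simp add: emeasure_density)
  then have prob: "prob_space M"
    by (rule prob_spaceI)
  have sets: "sets M = sets borel"
    unfolding M_def by simp
  note integral_eq_covmat = integral_transpose_mult_grad_eq_covmat[OF prob sets moments[folded M_def]]
  have "(\<integral>z. transpose (Ktm A (integral\<^sup>L M (Hm A)) z ** (matrix_inv \<Gamma>m ** matrix_inv \<Gamma>m))
      ** grad (Hm A) z \<partial>M) = (matrix_inv \<Gamma>m ** matrix_inv \<Gamma>m) ** covmat M (Hm A)"
    by (rule integral_eq_covmat[OF Hm_differentiable Hm_scaleR _ Ktm_eq])
      (simp_all add: matrix_transpose_mul sym_pos_def_mat_transpose_matrix_inv[OF Gm])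
  moreover have "(\<integral>z. transpose (Ktv A (integral\<^sup>L M (Hv A)) z ** (matrix_inv \<Gamma>v ** matrix_inv \<Gamma>v))
      ** grad (Hv A) z \<partial>M) = (matrix_inv \<Gamma>v ** matrix_inv \<Gamma>v) ** covmat M (Hv A)"
    by (rule integral_eq_covmat[OF Hv_differentiable Hv_scaleR _ Ktv_eq])
      (simp_all add: matrix_transpose_mul sym_pos_def_mat_transpose_matrix_inv[OF Gv])
  ultimately show ?thesis
    unfolding Let_def M_def by blast
qed

end
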